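(* Let $\kappa$ be a cardinal and let $F_\kappa$ be the free group on $\kappa$ generators. Then for every uncountable ordinal $\lambda$ there is a partition $F_\kappa=A_0\cup A_1$ into two cells such that there is no injective sequence $\vec{x}=\langle x_\xi : \xi<\lambda\rangle$ of elements of $F_\kappa$ and no $i\in 2$ with $\mathrm{FP}(\vec{x})\subseteq A_i$; that is, $\mathrm{Hind}(F_\kappa,\lambda)$ fails.
   Context: For a semigroup $(S,* )$, an ordinal $\alpha$ and a sequence $\vec{x}=\langle x_\xi : \xi<\alpha\rangle$ in $S$, $\mathrm{FP}(\vec{x})$ is the set of all finite products $x_{\xi_0}*x_{\xi_1}*\cdots*x_{\xi_l}$ with $l<\omega$ and $\xi_0<\xi_1<\cdots<\xi_l<\alpha$. $\mathrm{Hind}(S,\alpha)$ is the statement: for every partition $S=A_0\cup A_1$ into two cells there exist an (injective) sequence $\vec{x}=\langle x_\xi:\xi<\alpha\rangle$ in $S$ and an $i\in 2$ with $\mathrm{FP}(\vec{x})\subseteq A_i$. *)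

theory Defs
  imports "HOL-Algebra.Group" "HOL-Library.Countable_Set"
begin

text \<open>A letter (a, True) stands for the generator a, (a, False) for its inverse.\<close>

fun reduced :: "('a \<times> bool) list \<Rightarrow> bool" where
  "reduced [] = True"
| "reduced [x] = True"
| "reduced (x # y # ys) = (\<not> (fst x = fst y \<and> snd x \<noteq> snd y) \<and> reduced (y # ys))"

fun cons_red :: "'a \<times> bool \<Rightarrow> ('a \<times> bool) list \<Rightarrow> ('a \<times> bool) list" where
  "cons_red x [] = [x]"
| "cons_red x (y # ys) = (if fst x = fst y \<and> snd x \<noteq> snd y then ys else x # y # ys)"

definition free_group :: "'a set \<Rightarrow> ('a \<times> bool) list monoid" where
  "free_group K = \<lparr> carrier = {w. reduced w \<and> fst ` set w \<subseteq> K},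
                    mult = (\<lambda>u v. foldr cons_red u v),
                    one = [] \<rparr>"

text \<open>An ordinal \<lambda> is represented by a well-order r; the index set {\<xi>. \<xi> < \<lambda>} is Field r.
  FP collects the products x \<xi>0 * ... * x \<xi>l over nonempty strictly r-increasing
  finite lists of indices.\<close>

definition FP :: "('g, 'm) monoid_scheme \<Rightarrow> 'b rel \<Rightarrow> ('b \<Rightarrow> 'g) \<Rightarrow> 'g set" where
  "FP S r x = {foldr (\<lambda>a b. a \<otimes>\<^bsub>S\<^esub> b) (map x (butlast xs)) (x (last xs)) | xs.
      xs \<noteq> [] \<and> set xs \<subseteq> Field r \<and> sorted_wrt (\<lambda>a b. (a, b) \<in> r \<and> a \<noteq> b) xs}"

definition Hind :: "('g, 'm) monoid_scheme \<Rightarrow> 'b rel \<Rightarrow> bool" where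
  "Hind S r \<longleftrightarrow> (\<forall>A0 A1. A0 \<union> A1 = carrier S \<and> A0 \<inter> A1 = {} \<longrightarrow>
      (\<exists>x. x \<in> Field r \<rightarrow> carrier S \<and> inj_on x (Field r) \<and>
           (FP S r x \<subseteq> A0 \<or> FP S r x \<subseteq> A1)))"

end

theory Submission
  imports Defs "HOL-Library.Discrete_Functions"
begin

text \<open>Colour a reduced word by the parity of \<open>\<lfloor>log\<^sub>2 |w|\<rfloor>\<close>, and suppose an injective
  sequence \<open>x\<close> has monochromatic finite products. Inside an initial segment of type \<open>\<omega>\<^sub>1\<close>, uncountably
  many words share a length \<open>n\<close>. Take the longest prefix \<open>P\<close> shared by uncountably many of them, and
  then the largest \<open>c\<close> such that uncountably many end with the inverse of the first \<open>c\<close> letters of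
  \<open>P\<close>: this yields uncountably many conjugates \<open>Q M\<^sub>\<xi> Q\<inverse>\<close> with \<open>|M\<^sub>\<xi>| = d \<ge> 1\<close>, where each
  \<open>M\<^sub>\<xi>\<close> cancels against only countably many \<open>M\<^sub>\<eta>\<close>. An increasing sequence \<open>\<xi>\<^sub>0 < \<xi>\<^sub>1 < \<dots>\<close>
  avoiding these cancellations has reduced products \<open>Q M\<^sub>\<xi>\<^sub>0 \<cdots> M\<^sub>\<xi>\<^sub>m\<^sub>-\<^sub>1 Q\<inverse>\<close> of every
  length \<open>2|Q| + m d\<close>, and such an arithmetic progression meets both colours.\<close>

definition letter_inv :: "'a \<times> bool \<Rightarrow> 'a \<times> bool" where
  "letter_inv p = (fst p, \<not> snd p)"

definition word_inv :: "('a \<times> bool) list \<Rightarrow> ('a \<times> bool) list" where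
  "word_inv w = rev (map letter_inv w)"

lemma letter_inv_letter_inv [simp]: "letter_inv (letter_inv p) = p"
  by (simp add: letter_inv_def)

lemma word_inv_word_inv [simp]: "word_inv (word_inv w) = w"
  by (simp add: word_inv_def rev_map comp_def)

lemma word_inv_Nil [simp]: "word_inv [] = []"
  and word_inv_Cons [simp]: "word_inv (a # w) = word_inv w @ [letter_inv a]"
  and word_inv_append [simp]: "word_inv (u @ v) = word_inv v @ word_inv u"
  and length_word_inv [simp]: "length (word_inv w) = length w"
  by (simp_all add: word_inv_def)

lemma reduced_Cons: "reduced (a # w) \<longleftrightarrow> reduced w \<and> (w \<noteq> [] \<longrightarrow> hd w \<noteq> letter_inv a)"
  by (cases w) (auto simp: letter_inv_def prod_eq_iff)

lemma reduced_append:
  "reduced (u @ v) \<longleftrightarrow> reduced u \<and> reduced v \<and> (u \<noteq> [] \<longrightarrow> v \<noteq> [] \<longrightarrow> hd v \<noteq> letter_inv (last u))"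
  by (induction u) (auto simp: reduced_Cons)

lemma foldr_cons_red_reduced: "reduced (u @ v) \<Longrightarrow> foldr cons_red u v = u @ v"
proof (induction u)
  case (Cons a u)
  then have "reduced (u @ v)" and "u @ v \<noteq> [] \<longrightarrow> hd (u @ v) \<noteq> letter_inv a"
    by (simp_all add: reduced_Cons)
  with Cons.IH show ?case
    by (cases "u @ v") (auto simp: letter_inv_def prod_eq_iff)
qed simp

lemma foldr_cons_red_cancel: "foldr cons_red u (word_inv u @ v) = v"
proof (induction u arbitrary: v)
  case (Cons a u)
  have "foldr cons_red (a # u) (word_inv (a # u) @ v) = cons_red a (letter_inv a # v)"
    using Cons.IH[of "letter_inv a # v"] by simp
  also have "\<dots> = v"
    by (simp add: letter_inv_def)
  finally show ?case .
qed simp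

lemma drop_eq_word_inv_take_Suc:
  assumes "c < length P" and "c < length w"
  shows "drop (length w - Suc c) w = word_inv (take (Suc c) P) \<longleftrightarrow>
    drop (length w - c) w = word_inv (take c P) \<and> w ! (length w - Suc c) = letter_inv (P ! c)"
proof -
  have "drop (length w - Suc c) w = w ! (length w - Suc c) # drop (Suc (length w - Suc c)) w"
    using assms(2) by (simp add: Cons_nth_drop_Suc)
  also have "Suc (length w - Suc c) = length w - c"
    using assms(2) by simp
  finally have "drop (length w - Suc c) w = w ! (length w - Suc c) # drop (length w - c) w" .
  then show ?thesis
    using assms(1) by (auto simp: take_Suc_conv_app_nth)
qed

lemma middle_drop_take:
  assumes "length w = n" and "2 * c < n"
  shows "w = take c w @ drop c (take (n - c) w) @ drop (n - c) w"
    and "length (drop c (take (n - c) w)) = n - 2 * c"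
    and "hd (drop c (take (n - c) w)) = w ! c"
    and "last (drop c (take (n - c) w)) = w ! (n - Suc c)"
proof -
  have "take c (take (n - c) w) = take c w"
    using assms by (auto simp: min_def)
  then have "take c w @ drop c (take (n - c) w) = take (n - c) w"
    by (metis append_take_drop_id)
  then show "w = take c w @ drop c (take (n - c) w) @ drop (n - c) w"
    by (metis append_assoc append_take_drop_id)
  show "length (drop c (take (n - c) w)) = n - 2 * c"
    using assms by simp
  show "hd (drop c (take (n - c) w)) = w ! c"
    using assms by (simp add: hd_drop_conv_nth)
  show "last (drop c (take (n - c) w)) = w ! (n - Suc c)"
    using assms by (simp add: last_conv_nth)
qed

definition free_group_prod :: "('a \<times> bool) list list \<Rightarrow> ('a \<times> bool) list" where
  "free_group_prod ws = foldr (\<lambda>u v. foldr cons_red u v) (butlast ws) (last ws)"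

lemma free_group_prod_singleton [simp]: "free_group_prod [w] = w"
  by (simp add: free_group_prod_def)

lemma free_group_prod_Cons:
  "ws \<noteq> [] \<Longrightarrow> free_group_prod (w # ws) = foldr cons_red w (free_group_prod ws)"
  by (simp add: free_group_prod_def)

lemma free_group_prod_in_FP:
  assumes "xs \<noteq> []" "set xs \<subseteq> Field r" "sorted_wrt (\<lambda>a b. (a, b) \<in> r \<and> a \<noteq> b) xs"
  shows "free_group_prod (map x xs) \<in> FP (free_group K) r x"
  using assms unfolding FP_def free_group_def free_group_prod_def
  by (auto simp: map_butlast last_map)

lemma free_group_prod_conjugates:
  assumes "Ms \<noteq> []" "\<forall>m\<in>set Ms. m \<noteq> [] \<and> reduced (Q @ m @ word_inv Q)"
    and "successively (\<lambda>u v. hd v \<noteq> letter_inv (last u)) Ms"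
  shows "free_group_prod (map (\<lambda>m. Q @ m @ word_inv Q) Ms) = Q @ concat Ms @ word_inv Q
    \<and> reduced (Q @ concat Ms @ word_inv Q)"
  using assms
proof (induction Ms rule: induct_list012)
  case (3 m m' Ms)
  let ?C = "concat (m' # Ms)"
  have "free_group_prod (map (\<lambda>m. Q @ m @ word_inv Q) (m' # Ms)) = Q @ ?C @ word_inv Q"
    and red: "reduced (Q @ ?C @ word_inv Q)"
    using "3.IH"(2) "3.prems" by simp_all
  then have prod: "free_group_prod (map (\<lambda>m. Q @ m @ word_inv Q) (m # m' # Ms))
      = foldr cons_red (Q @ m) (foldr cons_red (word_inv Q) (word_inv (word_inv Q) @ ?C @ word_inv Q))"
    by (simp add: free_group_prod_Cons)
  have m: "reduced ((Q @ m) @ word_inv Q)" "m \<noteq> []" "m' \<noteq> []" "hd m' \<noteq> letter_inv (last m)"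
    using "3.prems" by simp_all
  have "reduced (Q @ m)" "reduced (?C @ word_inv Q)"
    using m(1) red reduced_append by blast+
  with m(2-4) have red': "reduced ((Q @ m) @ (?C @ word_inv Q))"
    by (simp only: reduced_append) simp
  have "free_group_prod (map (\<lambda>m. Q @ m @ word_inv Q) (m # m' # Ms)) = (Q @ m) @ (?C @ word_inv Q)"
    unfolding prod by (simp only: foldr_cons_red_cancel foldr_cons_red_reduced[OF red'])
  with red' show ?case
    by simp
qed simp_all

lemma length_free_group_prod_conjugates:
  assumes "m \<ge> 1" and d: "d \<ge> 1" "\<And>k. length (N k) = d"
    and red: "\<And>k. reduced (Q @ N k @ word_inv Q)"
    and junction: "\<And>k. hd (N (Suc k)) \<noteq> letter_inv (last (N k))"
  shows "length (free_group_prod (map (\<lambda>k. Q @ N k @ word_inv Q) [0..<m])) = 2 * length Q + m * d"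
proof -
  have nonempty: "N k \<noteq> []" for k
    using d(1) d(2)[of k] by auto
  have "free_group_prod (map (\<lambda>m. Q @ m @ word_inv Q) (map N [0..<m])) = Q @ concat (map N [0..<m]) @ word_inv Q"
  proof (rule conjunct1[OF free_group_prod_conjugates])
    show "map N [0..<m] \<noteq> []"
      using assms(1) by simp
    show "\<forall>n\<in>set (map N [0..<m]). n \<noteq> [] \<and> reduced (Q @ n @ word_inv Q)"
      using nonempty red by auto
    show "successively (\<lambda>u v. hd v \<noteq> letter_inv (last u)) (map N [0..<m])"
      using junction by (simp add: successively_map successively_conv_nth)
  qed
  moreover have "length (concat (map N [0..<m])) = m * d"
    using d(2) by (simp add: length_concat comp_def map_replicate_const sum_list_replicate)
  ultimately show ?thesis
    by (simp add: comp_def)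
qed

lemma arith_prog_enters_interval:
  assumes "(d::nat) \<ge> 1"
  shows "a < T \<Longrightarrow> \<exists>k\<ge>1. T \<le> a + k * d \<and> a + k * d < T + d"
proof (induction T)
  case (Suc T)
  show ?case
  proof (cases "a < T")
    case False
    then have "T = a"
      using Suc.prems by simp
    then show ?thesis
      using assms by (intro exI[of _ 1]) auto
  next
    case True
    then obtain k where k: "k \<ge> 1" "T \<le> a + k * d" "a + k * d < T + d"
      using Suc.IH by auto
    show ?thesis
    proof (cases "Suc T \<le> a + k * d")
      case True
      then show ?thesis
        using k by (intro exI[of _ k]) auto
    next
      case False
      then show ?thesis
        using k assms by (intro exI[of _ "Suc k"]) auto
    qed
  qed
qed simp

lemma floor_log_arith_prog_parities:
  assumes "(d::nat) \<ge> 1"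
  shows "\<exists>k\<ge>1. even (floor_log (a + k * d))" and "\<exists>k\<ge>1. odd (floor_log (a + k * d))"
proof -
  have hit: "\<exists>k\<ge>1. floor_log (a + k * d) = j" if j: "a < 2 ^ j" "d \<le> 2 ^ j" for j
  proof -
    obtain k where k: "k \<ge> 1" "2 ^ j \<le> a + k * d" "a + k * d < 2 ^ j + d"
      using arith_prog_enters_interval[OF assms j(1)] by auto
    have "floor_log (a + k * d) = j"
      by (rule floor_log_eqI) (use k j in auto)
    with k show ?thesis
      by auto
  qed
  let ?j = "a + d"
  have "a < 2 ^ ?j" "d \<le> 2 ^ ?j" "a < 2 ^ Suc ?j" "d \<le> 2 ^ Suc ?j"
    using less_exp[of ?j] less_exp[of "Suc ?j"] by linarith+
  then obtain k k' where "k \<ge> 1" "floor_log (a + k * d) = ?j" "k' \<ge> 1" "floor_log (a + k' * d) = Suc ?j"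
    using hit by meson
  then show "\<exists>k\<ge>1. even (floor_log (a + k * d))" "\<exists>k\<ge>1. odd (floor_log (a + k * d))"
    by (cases "even ?j"; auto)+
qed

lemma uncountable_UN_cover:
  assumes "\<not> countable Y" "countable I" "Y \<subseteq> (\<Union>i\<in>I. f i)"
  obtains i where "i \<in> I" "\<not> countable (Y \<inter> f i)"
proof -
  have "Y = (\<Union>i\<in>I. Y \<inter> f i)"
    using assms(3) by blast
  with assms(1,2) show ?thesis
    using that by (metis countable_UN)
qed

lemma inj_on_fiber_countable:
  assumes "inj_on x Y"
  shows "countable {\<xi>\<in>Y. x \<xi> = w}"
proof -
  have "{\<xi>\<in>Y. x \<xi> = w} \<subseteq> inv_into Y x ` {w}"
  proof
    fix \<xi>
    assume "\<xi> \<in> {\<xi>\<in>Y. x \<xi> = w}"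
    then show "\<xi> \<in> inv_into Y x ` {w}"
      using inv_into_f_f[OF assms, of \<xi>] by auto
  qed
  then show ?thesis
    by (rule countable_subset) simp
qed

lemma uncountable_maximal_prefix:
  fixes x :: "'b \<Rightarrow> 'c list"
  assumes Y: "\<not> countable Y" and inj: "inj_on x Y" and len: "\<And>\<xi>. \<xi> \<in> Y \<Longrightarrow> length (x \<xi>) = n"
  obtains Y' P where "Y' \<subseteq> Y" "\<not> countable Y'" "length P < n"
    "\<And>\<xi>. \<xi> \<in> Y' \<Longrightarrow> take (length P) (x \<xi>) = P"
    "\<And>a. countable {\<xi>\<in>Y'. x \<xi> ! length P = a}"
proof -
  define extensions where "extensions P = {\<xi>\<in>Y. take (length P) (x \<xi>) = P}" for P
  have prefix: "take (length P) (x \<xi>) = P" "length P \<le> n" if "\<xi> \<in> extensions P" for \<xi> P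
    using that len by (auto simp: extensions_def dest!: arg_cong[of _ _ length])
  have bound: "length P < Suc n" if "\<not> countable (extensions P)" for P
  proof -
    from that obtain \<xi> where "\<xi> \<in> extensions P"
      by (metis countable_empty equals0I)
    then show ?thesis
      using prefix by (simp add: less_Suc_eq_le)
  qed
  have "\<not> countable (extensions [])"
    using Y by (simp add: extensions_def)
  then obtain P where P: "\<not> countable (extensions P)"
    and max: "\<And>Q. \<not> countable (extensions Q) \<Longrightarrow> length Q \<le> length P"
    using ex_has_greatest_nat[of "\<lambda>P. \<not> countable (extensions P)" "[]" length "Suc n"] bound by blast
  have "length P \<noteq> n"
  proof
    assume "length P = n"
    then have "extensions P \<subseteq> {\<xi>\<in>Y. x \<xi> = P}"
      using prefix len by (auto simp: extensions_def)
    with P show False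
      using inj_on_fiber_countable[OF inj] countable_subset by blast
  qed
  with bound[OF P] have short: "length P < n"
    by simp
  have spread: "countable {\<xi>\<in>extensions P. x \<xi> ! length P = a}" for a
  proof -
    have "countable (extensions (P @ [a]))"
      using max[of "P @ [a]"] by (cases "countable (extensions (P @ [a]))") simp_all
    moreover have "{\<xi>\<in>extensions P. x \<xi> ! length P = a} \<subseteq> extensions (P @ [a])"
      using short len by (auto simp: extensions_def take_Suc_conv_app_nth)
    ultimately show ?thesis
      by (rule countable_subset[rotated])
  qed
  show ?thesis
  proof (rule that[of "extensions P" P])
    show "extensions P \<subseteq> Y"
      by (auto simp: extensions_def)
  qed (use P short prefix(1) spread in simp_all)
qed

lemma uncountable_constant_maximum:
  fixes Q :: "'b \<Rightarrow> nat \<Rightarrow> bool"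
  assumes Y: "\<not> countable Y" and Q0: "\<And>\<xi>. \<xi> \<in> Y \<Longrightarrow> Q \<xi> 0"
  obtains c Y' where "c \<le> N" "Y' \<subseteq> Y" "\<not> countable Y'" "\<And>\<xi>. \<xi> \<in> Y' \<Longrightarrow> Q \<xi> c"
    "\<And>\<xi> j. \<xi> \<in> Y' \<Longrightarrow> c < j \<Longrightarrow> j \<le> N \<Longrightarrow> \<not> Q \<xi> j"
proof -
  define top where "top \<xi> = (GREATEST j. j \<le> N \<and> Q \<xi> j)" for \<xi>
  have top: "top \<xi> \<le> N" "Q \<xi> (top \<xi>)" "\<And>j. j \<le> N \<Longrightarrow> Q \<xi> j \<Longrightarrow> j \<le> top \<xi>"
    if "\<xi> \<in> Y" for \<xi>
  proof -
    let ?P = "\<lambda>j. j \<le> N \<and> Q \<xi> j"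
    have "?P 0" and bound: "\<And>j. ?P j \<Longrightarrow> j \<le> N"
      using Q0[OF that] by simp_all
    then have "?P (Greatest ?P)"
      by (rule GreatestI_nat)
    moreover have "j \<le> Greatest ?P" if "?P j" for j
      using that bound by (rule Greatest_le_nat)
    ultimately show "top \<xi> \<le> N" "Q \<xi> (top \<xi>)" "\<And>j. j \<le> N \<Longrightarrow> Q \<xi> j \<Longrightarrow> j \<le> top \<xi>"
      unfolding top_def by simp_all
  qed
  have "Y \<subseteq> (\<Union>c\<in>{..N}. {\<xi>. top \<xi> = c})"
    using top(1) by blast
  then obtain c where "c \<in> {..N}" "\<not> countable (Y \<inter> {\<xi>. top \<xi> = c})"
    by (rule uncountable_UN_cover[OF Y countable_finite[OF finite_atMost]])
  then show ?thesis
  proof (intro that[of c "Y \<inter> {\<xi>. top \<xi> = c}"])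
    fix \<xi> j
    assume "\<xi> \<in> Y \<inter> {\<xi>. top \<xi> = c}" "c < j" "j \<le> N"
    then show "\<not> Q \<xi> j"
      using top(3)[of \<xi> j] by auto
  qed (use top in auto)
qed

lemma uncountable_prefix_suffix_family:
  fixes x :: "'b \<Rightarrow> ('a \<times> bool) list"
  assumes Y: "\<not> countable Y" and inj: "inj_on x Y" and len: "\<And>\<xi>. \<xi> \<in> Y \<Longrightarrow> length (x \<xi>) = n"
  obtains Y' c P where "Y' \<subseteq> Y" "\<not> countable Y'" "c \<le> length P" "length P < n" "2 * c < n"
    "\<And>\<xi>. \<xi> \<in> Y' \<Longrightarrow> take (length P) (x \<xi>) = P"
    "\<And>\<xi>. \<xi> \<in> Y' \<Longrightarrow> drop (n - c) (x \<xi>) = word_inv (take c P)"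
    "\<And>\<xi>. \<xi> \<in> Y' \<Longrightarrow> c < length P \<Longrightarrow> x \<xi> ! (n - Suc c) \<noteq> letter_inv (P ! c)"
    "\<And>a. countable {\<xi>\<in>Y'. x \<xi> ! length P = a}"
proof -
  obtain Y\<^sub>1 P where Y\<^sub>1: "Y\<^sub>1 \<subseteq> Y" "\<not> countable Y\<^sub>1" "length P < n"
    and prefix: "\<And>\<xi>. \<xi> \<in> Y\<^sub>1 \<Longrightarrow> take (length P) (x \<xi>) = P"
    and spread: "\<And>a. countable {\<xi>\<in>Y\<^sub>1. x \<xi> ! length P = a}"
    using uncountable_maximal_prefix[OF Y inj len] by blast
  define suffix where "suffix \<xi> j \<longleftrightarrow> drop (n - j) (x \<xi>) = word_inv (take j P)" for \<xi> j
  have suffix0: "suffix \<xi> 0" if "\<xi> \<in> Y\<^sub>1" for \<xi>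
    using len that Y\<^sub>1(1) by (auto simp: suffix_def)
  obtain c Y\<^sub>2 where c: "c \<le> length P" "Y\<^sub>2 \<subseteq> Y\<^sub>1" "\<not> countable Y\<^sub>2"
    and suffix: "\<And>\<xi>. \<xi> \<in> Y\<^sub>2 \<Longrightarrow> suffix \<xi> c"
    and max: "\<And>\<xi> j. \<xi> \<in> Y\<^sub>2 \<Longrightarrow> c < j \<Longrightarrow> j \<le> length P \<Longrightarrow> \<not> suffix \<xi> j"
    using uncountable_constant_maximum[where Q = suffix and N = "length P", OF Y\<^sub>1(2) suffix0] by blast
  have len\<^sub>2: "length (x \<xi>) = n" if "\<xi> \<in> Y\<^sub>2" for \<xi>
    using len that c(2) Y\<^sub>1(1) by blast
  have "2 * c < n"
    \<comment> \<open>otherwise position \<open>length P\<close> lies in the common suffix, where all of \<open>Y\<^sub>2\<close> agree\<close>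
  proof (rule ccontr)
    assume "\<not> 2 * c < n"
    then have le: "n - c \<le> length P"
      using c(1) by linarith
    define a where "a = word_inv (take c P) ! (length P - (n - c))"
    have "x \<xi> ! length P = a" if "\<xi> \<in> Y\<^sub>2" for \<xi>
    proof -
      have "x \<xi> ! length P = drop (n - c) (x \<xi>) ! (length P - (n - c))"
        using le len\<^sub>2[OF that] Y\<^sub>1(3) by simp
      with suffix[OF that] show ?thesis
        by (simp add: suffix_def a_def)
    qed
    then have "Y\<^sub>2 \<subseteq> {\<xi>\<in>Y\<^sub>1. x \<xi> ! length P = a}"
      using c(2) by blast
    from countable_subset[OF this spread] c(3) show False
      by simp
  qed
  moreover have "x \<xi> ! (n - Suc c) \<noteq> letter_inv (P ! c)" if \<xi>: "\<xi> \<in> Y\<^sub>2" and "c < length P" for \<xi>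
  proof -
    have "\<not> suffix \<xi> (Suc c)"
      using max[OF \<xi>] \<open>c < length P\<close> by simp
    moreover have "c < length (x \<xi>)"
      using len\<^sub>2[OF \<xi>] \<open>c < length P\<close> Y\<^sub>1(3) by simp
    ultimately show ?thesis
      using drop_eq_word_inv_take_Suc[OF \<open>c < length P\<close> \<open>c < length (x \<xi>)\<close>] suffix[OF \<xi>]
      by (simp add: suffix_def len\<^sub>2[OF \<xi>])
  qed
  moreover have "countable {\<xi>\<in>Y\<^sub>2. x \<xi> ! length P = a}" for a
    by (rule countable_subset[OF _ spread[of a]]) (use c(2) in blast)
  ultimately show ?thesis
    using c prefix suffix Y\<^sub>1 unfolding suffix_def
    by (intro that[of Y\<^sub>2 c P]) auto
qed

lemma uncountable_conjugate_family:
  fixes x :: "'b \<Rightarrow> ('a \<times> bool) list"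
  assumes Y: "\<not> countable Y" and inj: "inj_on x Y" and len: "\<And>\<xi>. \<xi> \<in> Y \<Longrightarrow> length (x \<xi>) = n"
  obtains Y' Q M d where "Y' \<subseteq> Y" "\<not> countable Y'"
    "\<And>\<xi>. \<xi> \<in> Y' \<Longrightarrow> x \<xi> = Q @ M \<xi> @ word_inv Q"
    "d \<ge> 1" "\<And>\<xi>. \<xi> \<in> Y' \<Longrightarrow> length (M \<xi>) = d"
    "\<And>\<xi>. \<xi> \<in> Y' \<Longrightarrow> countable {\<eta>\<in>Y'. hd (M \<eta>) = letter_inv (last (M \<xi>))}"
proof -
  obtain Y' c P where Y': "Y' \<subseteq> Y" "\<not> countable Y'" "c \<le> length P" "length P < n" "2 * c < n"
    and prefix: "\<And>\<xi>. \<xi> \<in> Y' \<Longrightarrow> take (length P) (x \<xi>) = P"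
    and suffix: "\<And>\<xi>. \<xi> \<in> Y' \<Longrightarrow> drop (n - c) (x \<xi>) = word_inv (take c P)"
    and maximal: "\<And>\<xi>. \<xi> \<in> Y' \<Longrightarrow> c < length P \<Longrightarrow> x \<xi> ! (n - Suc c) \<noteq> letter_inv (P ! c)"
    and spread: "\<And>a. countable {\<xi>\<in>Y'. x \<xi> ! length P = a}"
    using uncountable_prefix_suffix_family[OF Y inj len] by blast
  define Q where "Q = take c P"
  define M where "M \<xi> = drop c (take (n - c) (x \<xi>))" for \<xi>
  have len': "length (x \<xi>) = n" if "\<xi> \<in> Y'" for \<xi>
    using len that Y'(1) by blast
  have middle: "x \<xi> = take c (x \<xi>) @ M \<xi> @ drop (n - c) (x \<xi>)" "length (M \<xi>) = n - 2 * c"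
    "hd (M \<xi>) = x \<xi> ! c" "last (M \<xi>) = x \<xi> ! (n - Suc c)" if "\<xi> \<in> Y'" for \<xi>
    unfolding M_def by (rule middle_drop_take[OF len'[OF that] Y'(5)])+
  have decomp: "x \<xi> = Q @ M \<xi> @ word_inv Q" if "\<xi> \<in> Y'" for \<xi>
  proof -
    have "x \<xi> = take c (x \<xi>) @ M \<xi> @ drop (n - c) (x \<xi>)"
      by (rule middle(1)[OF that])
    also have "take c (x \<xi>) = take c (take (length P) (x \<xi>))"
      using Y'(3) by (simp add: min_def)
    also have "\<dots> = Q"
      using prefix[OF that] by (simp add: Q_def)
    also have "drop (n - c) (x \<xi>) = word_inv Q"
      using suffix[OF that] by (simp add: Q_def)
    finally show ?thesis .
  qed
  have "countable {\<eta>\<in>Y'. hd (M \<eta>) = letter_inv (last (M \<xi>))}" if \<xi>: "\<xi> \<in> Y'" for \<xi>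
  proof (cases "c < length P")
    case True
    have "hd (M \<eta>) = P ! c" if "\<eta> \<in> Y'" for \<eta>
    proof -
      have "x \<eta> ! c = take (length P) (x \<eta>) ! c"
        using True by simp
      with prefix[OF that] middle(3)[OF that] show ?thesis
        by simp
    qed
    moreover have "P ! c \<noteq> letter_inv (last (M \<xi>))"
      \<comment> \<open>else the suffix \<open>word_inv (take c P)\<close> of \<open>x \<xi>\<close> would extend by one letter\<close>
      using maximal[OF \<xi> True] middle(4)[OF \<xi>] by auto
    ultimately have "{\<eta>\<in>Y'. hd (M \<eta>) = letter_inv (last (M \<xi>))} = {}"
      by auto
    then show ?thesis
      by (metis countable_empty)
  next
    case False
    then have "{\<eta>\<in>Y'. hd (M \<eta>) = letter_inv (last (M \<xi>))}
        \<subseteq> {\<eta>\<in>Y'. x \<eta> ! length P = letter_inv (last (M \<xi>))}"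
      using Y'(3) middle(3) by auto
    then show ?thesis
      using spread by (rule countable_subset)
  qed
  then show ?thesis
    using Y'(1,2,5) decomp middle(2) by (intro that[of Y' Q M "n - 2 * c"]) auto
qed

lemma Well_order_uncountable_countable_segments:
  assumes wo: "Well_order r" and unc: "\<not> countable (Field r)"
  obtains D where "D \<subseteq> Field r" "\<not> countable D" "\<And>\<xi>. \<xi> \<in> D \<Longrightarrow> countable (under r \<xi>)"
proof (cases "\<forall>\<xi>\<in>Field r. countable (under r \<xi>)")
  case True
  then show ?thesis
    by (intro that[of "Field r"]) (simp_all add: unc)
next
  case False
  define B where "B = {\<xi>\<in>Field r. \<not> countable (under r \<xi>)}"
  have "wf (r - Id)"
    using wo by (simp add: well_order_on_def)
  moreover from False obtain b where "b \<in> B"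
    by (auto simp: B_def)
  ultimately obtain z where z: "z \<in> B" and min: "\<And>y. (y, z) \<in> r - Id \<Longrightarrow> y \<notin> B"
    by (rule wfE_min) blast
  show ?thesis
  proof (rule that[of "under r z - {z}"])
    show "under r z - {z} \<subseteq> Field r"
      by (auto simp: under_def Field_def)
    show "\<not> countable (under r z - {z})"
      using z by (simp add: B_def)
    show "countable (under r \<xi>)" if "\<xi> \<in> under r z - {z}" for \<xi>
      using min[of \<xi>] that by (auto simp: under_def Field_def B_def)
  qed
qed

lemma Well_order_uncountable_above:
  assumes wo: "Well_order r" and seg: "countable (under r \<xi>)" and \<xi>: "\<xi> \<in> Field r"
    and Y: "Y \<subseteq> Field r" "\<not> countable Y" and E: "countable E"
  obtains \<eta> where "\<eta> \<in> Y" "\<eta> \<notin> E" "(\<xi>, \<eta>) \<in> r" "\<eta> \<noteq> \<xi>"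
proof -
  have "\<not> countable (Y - E - under r \<xi>)"
  proof
    assume "countable (Y - E - under r \<xi>)"
    then have "countable ((Y - E - under r \<xi>) \<union> E \<union> under r \<xi>)"
      using E seg by simp
    moreover have "Y \<subseteq> (Y - E - under r \<xi>) \<union> E \<union> under r \<xi>"
      by blast
    ultimately show False
      using Y(2) by (metis countable_subset)
  qed
  then obtain \<eta> where \<eta>: "\<eta> \<in> Y" "\<eta> \<notin> E" "(\<eta>, \<xi>) \<notin> r"
    by (metis DiffE countable_empty equals0I under_def mem_Collect_eq)
  have refl: "refl_on (Field r) r" and total: "total_on (Field r) r"
    using wo by (simp_all add: well_order_on_def linear_order_on_def partial_order_on_def preorder_on_def)
  have ne: "\<eta> \<noteq> \<xi>"
    using \<eta>(3) refl_onD[OF refl \<xi>] by blast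
  then have "(\<xi>, \<eta>) \<in> r"
    using total \<xi> Y(1) \<eta>(1,3) unfolding total_on_def by blast
  then show ?thesis
    using \<eta>(1,2) ne by (intro that)
qed

lemma Well_order_increasing_chain:
  assumes wo: "Well_order r" and seg: "\<And>\<xi>. \<xi> \<in> Y \<Longrightarrow> countable (under r \<xi>)"
    and Y: "Y \<subseteq> Field r" "\<not> countable Y" and B: "\<And>\<xi>. \<xi> \<in> Y \<Longrightarrow> countable {\<eta>\<in>Y. B \<xi> \<eta>}"
  obtains s where "\<And>k. s k \<in> Y"
    "\<And>k. (s k, s (Suc k)) \<in> r \<and> s k \<noteq> s (Suc k) \<and> \<not> B (s k) (s (Suc k))"
proof -
  have step: "\<exists>\<eta>. \<eta> \<in> Y \<and> (\<xi>, \<eta>) \<in> r \<and> \<xi> \<noteq> \<eta> \<and> \<not> B \<xi> \<eta>" if \<xi>: "\<xi> \<in> Y" for \<xi>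
  proof -
    have "\<xi> \<in> Field r"
      using \<xi> Y(1) by blast
    then obtain \<eta> where "\<eta> \<in> Y" "\<eta> \<notin> {\<eta>\<in>Y. B \<xi> \<eta>}" "(\<xi>, \<eta>) \<in> r" "\<eta> \<noteq> \<xi>"
      by (rule Well_order_uncountable_above[OF wo seg[OF \<xi>] _ Y B[OF \<xi>]])
    then show ?thesis
      by auto
  qed
  obtain \<xi>\<^sub>0 where "\<xi>\<^sub>0 \<in> Y"
    by (metis Y(2) countable_empty equals0I)
  then have "\<exists>s. \<forall>k. s k \<in> Y \<and> ((s k, s (Suc k)) \<in> r \<and> s k \<noteq> s (Suc k) \<and> \<not> B (s k) (s (Suc k)))"
    by (intro dependent_nat_choice) (use step in auto)
  then obtain s where s: "\<And>k. s k \<in> Y \<and> (s k, s (Suc k)) \<in> r \<and> s k \<noteq> s (Suc k) \<and> \<not> B (s k) (s (Suc k))"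
    by blast
  show ?thesis
    by (rule that[of s]) (simp_all add: s)
qed

lemma Well_order_sorted_wrt_chain:
  assumes "Well_order r" and "\<And>k. (s k, s (Suc k)) \<in> r \<and> s k \<noteq> s (Suc k)"
  shows "sorted_wrt (\<lambda>a b. (a, b) \<in> r \<and> a \<noteq> b) (map s [0..<m])"
proof -
  have "transp (\<lambda>a b. (a, b) \<in> r \<and> a \<noteq> b)"
    using assms(1) trans_diff_Id
    by (auto simp: transp_def well_order_on_def linear_order_on_def partial_order_on_def preorder_on_def trans_def)
  moreover have "successively (\<lambda>a b. (a, b) \<in> r \<and> a \<noteq> b) (map s [0..<m])"
    using assms(2) by (simp add: successively_map successively_conv_nth)
  ultimately show ?thesis
    by (simp add: successively_conv_sorted_wrt)
qed

lemma free_group_FP_arith_prog_lengths: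
  assumes wo: "Well_order r" and unc: "\<not> countable (Field r)"
    and x: "x \<in> Field r \<rightarrow> carrier (free_group K)" and inj: "inj_on x (Field r)"
  obtains a d where "d \<ge> 1" "\<And>m. m \<ge> 1 \<Longrightarrow> \<exists>w\<in>FP (free_group K) r x. length w = a + m * d"
proof -
  obtain D where D: "D \<subseteq> Field r" "\<not> countable D"
    and seg: "\<And>\<xi>. \<xi> \<in> D \<Longrightarrow> countable (under r \<xi>)"
    using Well_order_uncountable_countable_segments[OF wo unc] by blast
  obtain n where n: "\<not> countable (D \<inter> {\<xi>. length (x \<xi>) = n})"
    using uncountable_UN_cover[OF D(2), of UNIV "\<lambda>n. {\<xi>. length (x \<xi>) = n}"] by auto
  have inj_n: "inj_on x (D \<inter> {\<xi>. length (x \<xi>) = n})"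
    by (rule inj_on_subset[OF inj]) (use D(1) in blast)
  have len_n: "length (x \<xi>) = n" if "\<xi> \<in> D \<inter> {\<xi>. length (x \<xi>) = n}" for \<xi>
    using that by simp
  obtain Y Q M d where Y: "Y \<subseteq> D \<inter> {\<xi>. length (x \<xi>) = n}" "\<not> countable Y"
    and decomp: "\<And>\<xi>. \<xi> \<in> Y \<Longrightarrow> x \<xi> = Q @ M \<xi> @ word_inv Q"
    and d: "d \<ge> 1" "\<And>\<xi>. \<xi> \<in> Y \<Longrightarrow> length (M \<xi>) = d"
    and junction: "\<And>\<xi>. \<xi> \<in> Y \<Longrightarrow> countable {\<eta>\<in>Y. hd (M \<eta>) = letter_inv (last (M \<xi>))}"
    using uncountable_conjugate_family[OF n inj_n len_n] by blast
  have YF: "Y \<subseteq> Field r"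
    using Y(1) D(1) by blast
  have segY: "countable (under r \<xi>)" if "\<xi> \<in> Y" for \<xi>
    using seg that Y(1) by blast
  obtain s where s: "\<And>k. s k \<in> Y"
    and step: "\<And>k. (s k, s (Suc k)) \<in> r \<and> s k \<noteq> s (Suc k)
      \<and> \<not> hd (M (s (Suc k))) = letter_inv (last (M (s k)))"
    using Well_order_increasing_chain[where B = "\<lambda>\<xi> \<eta>. hd (M \<eta>) = letter_inv (last (M \<xi>))",
        OF wo segY YF Y(2) junction]
    by blast
  have "\<exists>w\<in>FP (free_group K) r x. length w = 2 * length Q + m * d" if "m \<ge> 1" for m
  proof
    let ?w = "free_group_prod (map x (map s [0..<m]))"
    show "?w \<in> FP (free_group K) r x"
      using that s YF Well_order_sorted_wrt_chain[OF wo, of s m] step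
      by (intro free_group_prod_in_FP) auto
    have reduced: "reduced (Q @ M (s k) @ word_inv Q)" for k
    proof -
      have "reduced (x (s k))"
        using x YF s[of k] by (auto simp: free_group_def Pi_iff)
      with decomp[OF s[of k]] show ?thesis
        by simp
    qed
    have "map x (map s [0..<m]) = map (\<lambda>k. Q @ M (s k) @ word_inv Q) [0..<m]"
      using decomp s by simp
    moreover have "hd (M (s (Suc k))) \<noteq> letter_inv (last (M (s k)))" for k
      using step by simp
    then have "length (free_group_prod (map (\<lambda>k. Q @ M (s k) @ word_inv Q) [0..<m]))
        = 2 * length Q + m * d"
      by (rule length_free_group_prod_conjugates[OF that d(1) d(2)[OF s] reduced])
    ultimately show "length ?w = 2 * length Q + m * d"
      by (simp only:)
  qed
  then show ?thesis
    using d(1) by (intro that) auto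
qed

theorem theorem4p1:
  fixes K :: "'a set" and r :: "'b rel"
  assumes "Well_order r" and "\<not> countable (Field r)"
  shows "\<not> Hind (free_group K) r"
proof
  assume "Hind (free_group K) r"
  define A\<^sub>0 where "A\<^sub>0 = {w \<in> carrier (free_group K). even (floor_log (length w))}"
  define A\<^sub>1 where "A\<^sub>1 = {w \<in> carrier (free_group K). odd (floor_log (length w))}"
  have "A\<^sub>0 \<union> A\<^sub>1 = carrier (free_group K) \<and> A\<^sub>0 \<inter> A\<^sub>1 = {}"
    unfolding A\<^sub>0_def A\<^sub>1_def by auto
  with \<open>Hind (free_group K) r\<close> obtain x where x: "x \<in> Field r \<rightarrow> carrier (free_group K)" "inj_on x (Field r)"
    and mono: "FP (free_group K) r x \<subseteq> A\<^sub>0 \<or> FP (free_group K) r x \<subseteq> A\<^sub>1"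
    unfolding Hind_def by meson
  obtain a d where "d \<ge> 1" and lengths: "\<And>m. m \<ge> 1 \<Longrightarrow> \<exists>w\<in>FP (free_group K) r x. length w = a + m * d"
    using free_group_FP_arith_prog_lengths[OF assms x] by blast
  obtain k k' where "k \<ge> 1" "even (floor_log (a + k * d))" "k' \<ge> 1" "odd (floor_log (a + k' * d))"
    using floor_log_arith_prog_parities[OF \<open>d \<ge> 1\<close>] by blast
  then obtain w w' where "w \<in> FP (free_group K) r x" "even (floor_log (length w))"
    and "w' \<in> FP (free_group K) r x" "odd (floor_log (length w'))"
    using lengths by metis
  with mono show False
    unfolding A\<^sub>0_def A\<^sub>1_def by blast
qed

end
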